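(* Let $(F,+,\cdot)$ be a (left) near-field, $I$ an index set, and $\boldsymbol\sigma=(\sigma_i)_{i\in I}$, $\boldsymbol\rho=(\rho_i)_{i\in I}$ families of multiplicative automorphisms of $F$. Let $F^{\boldsymbol\sigma,\boldsymbol\rho}$ be the set of finitely supported families $(\alpha_i)_{i\in I}\in F^I$, with addition $(\alpha_i)_i+_{\boldsymbol\sigma}(\beta_i)_i=(\alpha_i+_{\sigma_i}\beta_i)_i$ and scalar multiplication $\alpha\cdot_{\boldsymbol\rho}(\alpha_i)_i=(\rho_i(\alpha)\alpha_i)_i$. Then $F^{\boldsymbol\sigma,\boldsymbol\rho}$ is a near-vector space over $F$, and for $\mathbf e_j=(\delta_{j,i})_{i\in I}$, every $j\in I$ and every $\gamma\in F\setminus\{0\}$, the element $\gamma\cdot_{\boldsymbol\rho}\mathbf e_j$ lies in the quasi-kernel and $$+_{\gamma\cdot_{\boldsymbol\rho}\mathbf e_j}=+_{\sigma_j\circ\rho_j\circ\varphi_\gamma}.$$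
   Context: A (left) near-field is $(F,+,\cdot,0,1)$ where $(F,\cdot,1)$ is a monoid, $(F\setminus\{0\},\cdot)$ is a group, $(F,+,0)$ is an abelian group, and $\alpha(\beta+\gamma)=\alpha\beta+\alpha\gamma$. A multiplicative automorphism is a monoid automorphism of $(F,\cdot)$. For a multiplicative automorphism $\tau$, $\alpha+_\tau\beta=\tau^{-1}(\tau(\alpha)+\tau(\beta))$. For $\gamma\neq0$, $\varphi_\gamma(\alpha)=\gamma^{-1}\alpha\gamma$. $\delta_{j,i}$ is $1$ if $i=j$ and $0$ otherwise. Near-vector space over $F$ (the scalar group $(F,\cdot,1,0,-1)$): an abelian group with a left action of $(F,\cdot)$ by endomorphisms, with $0,1,-1$ acting as $0,\mathrm{id},-\mathrm{id}$, the action free, and the quasi-kernel $Q(V)=\{u:\forall\alpha,\beta\in F\ \exists\gamma,\ \alpha u+\beta u=\gamma u\}$ generating $V$ additively. For $u\in Q(V)\setminus\{0\}$, $\alpha+_u\beta$ is the unique $\gamma$ with $\alpha u+\beta u=\gamma u$. *)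

theory Defs
  imports Main
begin

definition near_field ::
  "('a \<Rightarrow> 'a \<Rightarrow> 'a) \<Rightarrow> ('a \<Rightarrow> 'a \<Rightarrow> 'a) \<Rightarrow> 'a \<Rightarrow> 'a \<Rightarrow> bool" where
  "near_field add mul zero one \<longleftrightarrow>
     \<comment> \<open>(F,\<cdot>,1) is a monoid\<close>
     (\<forall>a b c. mul (mul a b) c = mul a (mul b c)) \<and>
     (\<forall>a. mul one a = a \<and> mul a one = a) \<and>
     \<comment> \<open>(F minus {0}, \<cdot>) is a group (with identity 1)\<close>
     one \<noteq> zero \<and>
     (\<forall>a b. a \<noteq> zero \<longrightarrow> b \<noteq> zero \<longrightarrow> mul a b \<noteq> zero) \<and>
     (\<forall>a. a \<noteq> zero \<longrightarrow> (\<exists>b. b \<noteq> zero \<and> mul a b = one \<and> mul b a = one)) \<and>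
     \<comment> \<open>(F,+,0) is an abelian group\<close>
     (\<forall>a b c. add (add a b) c = add a (add b c)) \<and>
     (\<forall>a b. add a b = add b a) \<and>
     (\<forall>a. add zero a = a) \<and>
     (\<forall>a. \<exists>b. add a b = zero) \<and>
     \<comment> \<open>left distributivity\<close>
     (\<forall>a b c. mul a (add b c) = add (mul a b) (mul a c))"

definition mult_aut :: "('a \<Rightarrow> 'a \<Rightarrow> 'a) \<Rightarrow> 'a \<Rightarrow> ('a \<Rightarrow> 'a) \<Rightarrow> bool" where
  "mult_aut mul one \<tau> \<longleftrightarrow> bij \<tau> \<and> (\<forall>a b. \<tau> (mul a b) = mul (\<tau> a) (\<tau> b)) \<and> \<tau> one = one"

definition add_tau :: "('a \<Rightarrow> 'a \<Rightarrow> 'a) \<Rightarrow> ('a \<Rightarrow> 'a) \<Rightarrow> 'a \<Rightarrow> 'a \<Rightarrow> 'a" where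
  "add_tau add \<tau> a b = inv \<tau> (add (\<tau> a) (\<tau> b))"

definition nf_inv :: "('a \<Rightarrow> 'a \<Rightarrow> 'a) \<Rightarrow> 'a \<Rightarrow> 'a \<Rightarrow> 'a" where
  "nf_inv mul one g = (THE b. mul g b = one)"

definition nf_neg :: "('a \<Rightarrow> 'a \<Rightarrow> 'a) \<Rightarrow> 'a \<Rightarrow> 'a \<Rightarrow> 'a" where
  "nf_neg add zero a = (THE b. add a b = zero)"

definition conj_map :: "('a \<Rightarrow> 'a \<Rightarrow> 'a) \<Rightarrow> 'a \<Rightarrow> 'a \<Rightarrow> 'a \<Rightarrow> 'a" where
  "conj_map mul one g a = mul (nf_inv mul one g) (mul a g)"

definition quasi_kernel ::
  "'v set \<Rightarrow> ('v \<Rightarrow> 'v \<Rightarrow> 'v) \<Rightarrow> ('a \<Rightarrow> 'v \<Rightarrow> 'v) \<Rightarrow> 'v set" where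
  "quasi_kernel V addV act = {u \<in> V. \<forall>a b. \<exists>c. addV (act a u) (act b u) = act c u}"

inductive_set add_gen :: "'v set \<Rightarrow> ('v \<Rightarrow> 'v \<Rightarrow> 'v) \<Rightarrow> 'v \<Rightarrow> 'v set \<Rightarrow> 'v set"
  for V addV zeroV S where
  gen_zero: "zeroV \<in> add_gen V addV zeroV S"
| gen_base: "u \<in> S \<Longrightarrow> u \<in> add_gen V addV zeroV S"
| gen_add: "u \<in> add_gen V addV zeroV S \<Longrightarrow> w \<in> add_gen V addV zeroV S \<Longrightarrow>
             addV u w \<in> add_gen V addV zeroV S"
| gen_neg: "u \<in> add_gen V addV zeroV S \<Longrightarrow> w \<in> V \<Longrightarrow> addV u w = zeroV \<Longrightarrow>
             w \<in> add_gen V addV zeroV S"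

definition near_vector_space ::
  "('a \<Rightarrow> 'a \<Rightarrow> 'a) \<Rightarrow> ('a \<Rightarrow> 'a \<Rightarrow> 'a) \<Rightarrow> 'a \<Rightarrow> 'a \<Rightarrow>
   'v set \<Rightarrow> ('v \<Rightarrow> 'v \<Rightarrow> 'v) \<Rightarrow> 'v \<Rightarrow> ('a \<Rightarrow> 'v \<Rightarrow> 'v) \<Rightarrow> bool" where
  "near_vector_space add mul zero one V addV zeroV act \<longleftrightarrow>
     \<comment> \<open>(V, addV, zeroV) is an abelian group\<close>
     zeroV \<in> V \<and>
     (\<forall>u\<in>V. \<forall>w\<in>V. addV u w \<in> V) \<and>
     (\<forall>u\<in>V. \<forall>w\<in>V. \<forall>x\<in>V. addV (addV u w) x = addV u (addV w x)) \<and>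
     (\<forall>u\<in>V. \<forall>w\<in>V. addV u w = addV w u) \<and>
     (\<forall>u\<in>V. addV zeroV u = u) \<and>
     (\<forall>u\<in>V. \<exists>w\<in>V. addV u w = zeroV) \<and>
     \<comment> \<open>left action of the monoid (F,\<cdot>) by endomorphisms\<close>
     (\<forall>a. \<forall>u\<in>V. act a u \<in> V) \<and>
     (\<forall>a. \<forall>u\<in>V. \<forall>w\<in>V. act a (addV u w) = addV (act a u) (act a w)) \<and>
     (\<forall>a b. \<forall>u\<in>V. act (mul a b) u = act a (act b u)) \<and>
     \<comment> \<open>0, 1, -1 act as 0, id, -id\<close>
     (\<forall>u\<in>V. act zero u = zeroV) \<and>
     (\<forall>u\<in>V. act one u = u) \<and>
     (\<forall>u\<in>V. addV u (act (nf_neg add zero one) u) = zeroV) \<and>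
     \<comment> \<open>the action is free\<close>
     (\<forall>a b. \<forall>u\<in>V. act a u = act b u \<longrightarrow> u = zeroV \<or> a = b) \<and>
     \<comment> \<open>the quasi-kernel generates V additively\<close>
     V = add_gen V addV zeroV (quasi_kernel V addV act)"

definition add_u :: "('v \<Rightarrow> 'v \<Rightarrow> 'v) \<Rightarrow> ('a \<Rightarrow> 'v \<Rightarrow> 'v) \<Rightarrow> 'v \<Rightarrow> 'a \<Rightarrow> 'a \<Rightarrow> 'a" where
  "add_u addV act u a b = (THE c. addV (act a u) (act b u) = act c u)"

definition fsupp_fams :: "'a \<Rightarrow> ('i \<Rightarrow> 'a) set" where
  "fsupp_fams zero = {f. finite {i. f i \<noteq> zero}}"

definition add_sigma :: "('a \<Rightarrow> 'a \<Rightarrow> 'a) \<Rightarrow> ('i \<Rightarrow> 'a \<Rightarrow> 'a) \<Rightarrow>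
    ('i \<Rightarrow> 'a) \<Rightarrow> ('i \<Rightarrow> 'a) \<Rightarrow> ('i \<Rightarrow> 'a)" where
  "add_sigma add \<sigma> f g = (\<lambda>i. add_tau add (\<sigma> i) (f i) (g i))"

definition smult_rho :: "('a \<Rightarrow> 'a \<Rightarrow> 'a) \<Rightarrow> ('i \<Rightarrow> 'a \<Rightarrow> 'a) \<Rightarrow> 'a \<Rightarrow> ('i \<Rightarrow> 'a) \<Rightarrow> ('i \<Rightarrow> 'a)" where
  "smult_rho mul \<rho> a f = (\<lambda>i. mul (\<rho> i a) (f i))"

definition unit_fam :: "'a \<Rightarrow> 'a \<Rightarrow> 'i \<Rightarrow> ('i \<Rightarrow> 'a)" where
  "unit_fam zero one j = (\<lambda>i. if j = i then one else zero)"

end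

theory Submission imports Defs begin

text \<open>Transporting the addition of \<open>F\<close> along a multiplicative automorphism \<open>t\<close> gives
  again a near-field \<open>(F, +\<^sub>t, \<cdot>)\<close>, because \<open>t\<^sup>-\<^sup>1\<close> is multiplicative too; and \<open>t\<close>
  fixes \<open>-1\<close>, as \<open>\<plusminus>1\<close> are the only square roots of \<open>1\<close>. So \<open>F\<^sup>\<sigma>\<^sup>,\<^sup>\<rho>\<close> satisfies the near-vector
  space axioms coordinatewise, the action being free since each \<open>\<rho>\<^sub>i\<close> is injective.
  For \<open>\<gamma> \<noteq> 0\<close> the only non-zero coordinate of \<open>\<alpha> \<cdot> (\<gamma> e\<^sub>j)\<close> is \<open>\<rho>\<^sub>j(\<alpha>\<gamma>)\<close>, and for
  \<open>\<pi> = \<sigma>\<^sub>j \<circ> \<rho>\<^sub>j\<close> we have \<open>\<pi>(\<alpha>\<gamma>) = \<pi>(\<gamma>) \<cdot> (\<pi> \<circ> \<phi>\<^sub>\<gamma>)(\<alpha>)\<close>; left distributivity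
  then turns \<open>+\<^sub>\<pi>\<close> on right multiples of \<open>\<gamma>\<close> into \<open>+\<^sub>\<tau>\<close> with \<open>\<tau> = \<pi> \<circ> \<phi>\<^sub>\<gamma>\<close>. Finally every finitely
  supported family is a finite sum of such scaled unit vectors.\<close>

lemma mult_aut_bij: "mult_aut mul one t \<Longrightarrow> bij t"
  and mult_aut_mul: "mult_aut mul one t \<Longrightarrow> t (mul a b) = mul (t a) (t b)"
  and mult_aut_one: "mult_aut mul one t \<Longrightarrow> t one = one"
  unfolding mult_aut_def by blast+

lemma mult_aut_inv_f_f: "mult_aut mul one t \<Longrightarrow> inv t (t x) = x"
  by (simp add: mult_aut_bij bij_is_inj)

lemma mult_aut_f_inv_f: "mult_aut mul one t \<Longrightarrow> t (inv t x) = x"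
  by (simp add: mult_aut_bij bij_is_surj surj_f_inv_f)

lemma mult_aut_inv:
  assumes "mult_aut mul one t" shows "mult_aut mul one (inv t)"
  unfolding mult_aut_def
proof (intro conjI allI)
  show "bij (inv t)" using assms by (simp add: mult_aut_bij bij_imp_bij_inv)
  show "inv t (mul a b) = mul (inv t a) (inv t b)" for a b
  proof -
    have "mul a b = t (mul (inv t a) (inv t b))"
      using assms by (simp add: mult_aut_mul mult_aut_f_inv_f)
    then show ?thesis using assms by (simp add: mult_aut_inv_f_f)
  qed
  show "inv t one = one"
    using assms by (metis mult_aut_one mult_aut_inv_f_f)
qed

lemma mult_aut_comp:
  "mult_aut mul one s \<Longrightarrow> mult_aut mul one t \<Longrightarrow> mult_aut mul one (s \<circ> t)"
  unfolding mult_aut_def by (auto intro: bij_comp)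

lemma add_tau_comp:
  "bij s \<Longrightarrow> bij r \<Longrightarrow> add_tau add (s \<circ> r) x y = inv r (add_tau add s (r x) (r y))"
  by (simp add: add_tau_def o_inv_distrib)

locale left_near_field =
  fixes add mul :: "'a \<Rightarrow> 'a \<Rightarrow> 'a" and zero one :: 'a
  assumes near_field: "near_field add mul zero one"
begin

abbreviation neg :: "'a \<Rightarrow> 'a" where "neg \<equiv> nf_neg add zero"
abbreviation recip :: "'a \<Rightarrow> 'a" where "recip \<equiv> nf_inv mul one"

lemma mul_assoc: "mul (mul a b) c = mul a (mul b c)"
  and one_mul: "mul one a = a"
  and mul_one: "mul a one = a"
  and one_neq_zero: "one \<noteq> zero"
  and mul_nonzero: "a \<noteq> zero \<Longrightarrow> b \<noteq> zero \<Longrightarrow> mul a b \<noteq> zero"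
  and ex_mul_inverse: "a \<noteq> zero \<Longrightarrow> \<exists>b. b \<noteq> zero \<and> mul a b = one \<and> mul b a = one"
  and add_assoc: "add (add a b) c = add a (add b c)"
  and add_commute: "add a b = add b a"
  and zero_add: "add zero a = a"
  and ex_add_inverse: "\<exists>b. add a b = zero"
  and distrib_left: "mul a (add b c) = add (mul a b) (mul a c)"
  using near_field unfolding near_field_def by blast+

lemma add_zero: "add a zero = a"
  using add_commute zero_add by metis

lemma add_left_cancel:
  assumes "add a b = add a c" shows "b = c"
proof -
  obtain n where n: "add a n = zero" using ex_add_inverse by blast
  have "add (add n a) b = add (add n a) c" using assms by (simp add: add_assoc)
  then show ?thesis using n by (metis add_commute zero_add)
qed

lemma add_neg: "add a (neg a) = zero"
proof -
  obtain n where n: "add a n = zero" using ex_add_inverse by blast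
  have "(THE b. add a b = zero) = n"
    using n add_left_cancel by (intro the_equality) auto
  then show ?thesis using n unfolding nf_neg_def by simp
qed

lemma neg_unique: "add a b = zero \<Longrightarrow> neg a = b"
  using add_neg add_left_cancel by metis

lemma neg_neg: "neg (neg a) = a"
  using add_neg add_commute neg_unique by metis

lemma mul_zero: "mul a zero = zero"
proof -
  have "add (mul a zero) (mul a zero) = add (mul a zero) zero"
    by (metis distrib_left add_zero)
  then show ?thesis by (rule add_left_cancel)
qed

lemma
  assumes "a \<noteq> zero"
  shows mul_recip: "mul a (recip a) = one" and recip_mul: "mul (recip a) a = one"
    and recip_nonzero: "recip a \<noteq> zero"
proof -
  obtain b where b: "b \<noteq> zero" "mul a b = one" "mul b a = one"
    using ex_mul_inverse assms by blast
  have "(THE c. mul a c = one) = b"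
    using b by (intro the_equality) (simp, metis mul_assoc one_mul)
  then show "mul a (recip a) = one" "mul (recip a) a = one" "recip a \<noteq> zero"
    using b unfolding nf_inv_def by simp_all
qed

lemma mul_left_cancel: "a \<noteq> zero \<Longrightarrow> mul a x = mul a y \<Longrightarrow> x = y"
  by (metis recip_mul mul_assoc one_mul)

lemma mul_right_cancel: "x \<noteq> zero \<Longrightarrow> mul a x = mul b x \<Longrightarrow> a = b"
  by (metis mul_recip mul_assoc mul_one)

lemma zero_mul: "mul zero a = zero"
proof (cases "a = zero")
  case False
  have "mul (mul zero a) (recip a) = mul zero (mul a (recip a))"
    by (simp add: mul_assoc)
  then have "mul (mul zero a) (recip a) = zero"
    using False by (simp add: mul_recip mul_one)
  then show ?thesis
    using mul_nonzero recip_nonzero[OF False] by blast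
qed (simp add: mul_zero)

lemma mul_neg: "mul a (neg b) = neg (mul a b)"
  by (metis add_neg distrib_left mul_zero neg_unique)

lemma square_eq_one: assumes "mul x x = one" shows "x = one \<or> x = neg one"
proof (cases "add x one = zero")
  case True
  then show ?thesis by (metis neg_unique add_commute)
next
  case False
  have "mul x (add x one) = mul one (add x one)"
    using assms by (metis distrib_left mul_one one_mul add_commute)
  then show ?thesis using mul_right_cancel[OF False] by blast
qed

lemma neg_one_square: "mul (neg one) (neg one) = one"
  by (metis mul_neg mul_one neg_neg)

text \<open>The conjugate \<open>a (-1) a\<^sup>-\<^sup>1\<close> squares to \<open>1\<close>, so it is \<open>1\<close> or \<open>-1\<close>;
  in the first case \<open>-1 = 1\<close>.\<close>
lemma neg_one_central: "mul a (neg one) = mul (neg one) a"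
proof (cases "a = zero")
  case False
  define y where "y = mul a (mul (neg one) (recip a))"
  have "mul y y = mul a (mul (neg one) (mul (mul (recip a) a) (mul (neg one) (recip a))))"
    unfolding y_def by (simp add: mul_assoc)
  also have "\<dots> = one"
    using False by (simp add: recip_mul one_mul mul_recip neg_one_square flip: mul_assoc)
  finally have "y = one \<or> y = neg one" by (rule square_eq_one)
  moreover have "mul y a = mul a (neg one)"
    unfolding y_def using False by (simp add: mul_assoc recip_mul mul_one)
  ultimately show ?thesis
    using False mul_left_cancel[OF False, of "neg one" one] by (auto simp: one_mul mul_one)
qed (simp add: mul_zero zero_mul)

lemma neg_one_mul: "mul (neg one) a = neg a"
  by (metis neg_one_central mul_neg mul_one)

lemma add_neg_one_mul: "add a (mul (neg one) a) = zero"
  by (simp add: neg_one_mul add_neg)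

lemma mult_aut_zero:
  assumes "mult_aut mul one t" shows "t zero = zero"
proof -
  obtain z where z: "t z = zero" using assms mult_aut_f_inv_f by metis
  have "t zero = t (mul zero z)" by (simp add: zero_mul)
  also have "\<dots> = zero" using assms z by (simp add: mult_aut_mul mul_zero)
  finally show ?thesis .
qed

lemma mult_aut_eq_zero_iff: "mult_aut mul one t \<Longrightarrow> t x = zero \<longleftrightarrow> x = zero"
  by (metis mult_aut_zero mult_aut_inv_f_f)

lemma mult_aut_neg_one:
  assumes "mult_aut mul one t" shows "t (neg one) = neg one"
proof -
  have "mul (t (neg one)) (t (neg one)) = one"
    using assms by (metis mult_aut_mul mult_aut_one neg_one_square)
  then have "t (neg one) = one \<or> t (neg one) = neg one" by (rule square_eq_one)
  then show ?thesis using assms by (metis mult_aut_one mult_aut_inv_f_f)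
qed

lemma mult_aut_conj_map:
  assumes "g \<noteq> zero" shows "mult_aut mul one (conj_map mul one g)"
  unfolding mult_aut_def
proof (intro conjI allI)
  have cancel: "mul (recip g) (mul g y) = y" "mul g (mul (recip g) y) = y" for y
    using assms by (simp_all add: recip_mul mul_recip one_mul flip: mul_assoc)
  show "bij (conj_map mul one g)"
  proof (rule o_bij)
    show "conj_map mul one g \<circ> (\<lambda>x. mul g (mul x (recip g))) = id"
     and "(\<lambda>x. mul g (mul x (recip g))) \<circ> conj_map mul one g = id"
      using assms by (auto simp: conj_map_def mul_assoc cancel recip_mul mul_recip mul_one)
  qed
  show "conj_map mul one g (mul a b) = mul (conj_map mul one g a) (conj_map mul one g b)" for a b
    by (simp add: conj_map_def mul_assoc cancel)
  show "conj_map mul one g one = one"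
    using assms by (simp add: conj_map_def one_mul recip_mul)
qed

lemma mult_aut_mul_right:
  assumes "mult_aut mul one p" "g \<noteq> zero"
  shows "p (mul x g) = mul (p g) ((p \<circ> conj_map mul one g) x)"
proof -
  have "mul x g = mul g (conj_map mul one g x)"
    using assms(2) by (simp add: conj_map_def mul_recip one_mul flip: mul_assoc)
  then have "p (mul x g) = p (mul g (conj_map mul one g x))" by simp
  also have "\<dots> = mul (p g) (p (conj_map mul one g x))" by (rule mult_aut_mul[OF assms(1)])
  finally show ?thesis by simp
qed

lemma left_near_field_add_tau:
  assumes t: "mult_aut mul one t" shows "left_near_field (add_tau add t) mul zero one"
proof -
  have t_inv: "t (inv t x) = x" "inv t (t x) = x" for x
    using t by (simp_all add: mult_aut_f_inv_f mult_aut_inv_f_f)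
  have inv_zero: "inv t zero = zero"
    using mult_aut_zero[OF mult_aut_inv[OF t]] .
  have distrib: "mul a (add_tau add t b c) = add_tau add t (mul a b) (mul a c)" for a b c
  proof -
    have "add_tau add t (mul a b) (mul a c) = inv t (mul (t a) (add (t b) (t c)))"
      using t by (simp add: add_tau_def mult_aut_mul distrib_left)
    also have "\<dots> = mul a (add_tau add t b c)"
      using mult_aut_mul[OF mult_aut_inv[OF t]] by (simp add: add_tau_def t_inv)
    finally show ?thesis by simp
  qed
  have "\<exists>b. add_tau add t a b = zero" for a
    using inv_zero by (intro exI[of _ "inv t (neg (t a))"]) (simp add: add_tau_def t_inv add_neg)
  moreover have "add_tau add t (add_tau add t a b) c = add_tau add t a (add_tau add t b c)"
    for a b c by (simp add: add_tau_def t_inv add_assoc)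
  moreover have "add_tau add t a b = add_tau add t b a" for a b
    by (simp add: add_tau_def add_commute)
  moreover have "add_tau add t zero a = a" for a
    by (simp add: add_tau_def t_inv zero_add mult_aut_zero[OF t])
  ultimately show ?thesis
    unfolding left_near_field_def near_field_def
    using distrib mul_assoc one_mul mul_one one_neq_zero mul_nonzero ex_mul_inverse
    by blast
qed

lemma neg_add_tau_one:
  assumes "mult_aut mul one t" shows "nf_neg (add_tau add t) zero one = neg one"
proof -
  have "add_tau add t one (neg one) = zero"
    using assms by (simp add: add_tau_def mult_aut_one mult_aut_neg_one add_neg
        mult_aut_zero[OF mult_aut_inv])
  then show ?thesis by (rule left_near_field.neg_unique[OF left_near_field_add_tau[OF assms]])
qed

lemma add_tau_mul_right:
  assumes p: "mult_aut mul one p" and g: "g \<noteq> zero"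
  shows "add_tau add p (mul a g) (mul b g) = mul (add_tau add (p \<circ> conj_map mul one g) a b) g"
proof -
  let ?q = "p \<circ> conj_map mul one g"
  let ?c = "add_tau add ?q a b"
  have q: "mult_aut mul one ?q" using mult_aut_comp[OF p mult_aut_conj_map[OF g]] .
  have qc: "?q ?c = add (?q a) (?q b)"
    unfolding add_tau_def by (rule mult_aut_f_inv_f[OF q])
  have "p (mul ?c g) = mul (p g) (?q ?c)" using mult_aut_mul_right[OF p g] .
  also have "\<dots> = mul (p g) (add (?q a) (?q b))"
    by (simp only: qc)
  also have "\<dots> = add (p (mul a g)) (p (mul b g))"
    by (simp add: distrib_left mult_aut_mul_right[OF p g])
  finally show ?thesis
    using p by (metis add_tau_def mult_aut_inv_f_f)
qed

end

lemma fsupp_fams_pointwise: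
  assumes "f \<in> fsupp_fams zero" "g \<in> fsupp_fams zero"
    and "\<And>i. f i = zero \<Longrightarrow> g i = zero \<Longrightarrow> h i = zero"
  shows "h \<in> fsupp_fams zero"
proof -
  have "{i. h i \<noteq> zero} \<subseteq> {i. f i \<noteq> zero} \<union> {i. g i \<noteq> zero}" using assms(3) by blast
  then show ?thesis using assms(1,2) unfolding fsupp_fams_def by (auto intro: finite_subset)
qed

lemma add_gen_subset:
  assumes "zeroV \<in> V" "\<And>u w. u \<in> V \<Longrightarrow> w \<in> V \<Longrightarrow> addV u w \<in> V" "S \<subseteq> V"
  shows "add_gen V addV zeroV S \<subseteq> V"
proof
  fix u assume "u \<in> add_gen V addV zeroV S"
  then show "u \<in> V" by induction (use assms in auto)
qed

locale near_field_families = left_near_field +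
  fixes \<sigma> \<rho> :: "'i \<Rightarrow> 'a \<Rightarrow> 'a"
  assumes mult_aut_\<sigma>: "mult_aut mul one (\<sigma> i)"
    and mult_aut_\<rho>: "mult_aut mul one (\<rho> i)"
begin

abbreviation V :: "('i \<Rightarrow> 'a) set" where "V \<equiv> fsupp_fams zero"
abbreviation addV where "addV \<equiv> add_sigma add \<sigma>"
abbreviation smult where "smult \<equiv> smult_rho mul \<rho>"
abbreviation zeroV :: "'i \<Rightarrow> 'a" where "zeroV \<equiv> \<lambda>i. zero"
abbreviation scaled_unit :: "'a \<Rightarrow> 'i \<Rightarrow> 'i \<Rightarrow> 'a" where
  "scaled_unit g j \<equiv> smult g (unit_fam zero one j)"

lemma coordinate_near_field: "left_near_field (add_tau add (\<sigma> i)) mul zero one"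
  by (rule left_near_field_add_tau[OF mult_aut_\<sigma>])

lemma zeroV_in_V: "zeroV \<in> V"
  unfolding fsupp_fams_def by simp

lemma addV_in_V: "u \<in> V \<Longrightarrow> w \<in> V \<Longrightarrow> addV u w \<in> V"
  by (erule fsupp_fams_pointwise)
    (simp_all add: add_sigma_def left_near_field.zero_add[OF coordinate_near_field])

lemma smult_in_V: "u \<in> V \<Longrightarrow> smult a u \<in> V"
  by (rule fsupp_fams_pointwise[where f = u and g = u]) (simp_all add: smult_rho_def mul_zero)

lemma scaled_unit_apply: "scaled_unit g j i = (if i = j then \<rho> j g else zero)"
  by (simp add: smult_rho_def unit_fam_def mul_one mul_zero)

lemma scaled_unit_in_V: "scaled_unit g j \<in> V"
proof -
  have "{i. scaled_unit g j i \<noteq> zero} \<subseteq> {j}" by (auto simp: scaled_unit_apply)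
  then show ?thesis unfolding fsupp_fams_def by (auto intro: finite_subset)
qed

lemma smult_free:
  assumes "smult a u = smult b u" "u \<noteq> zeroV" shows "a = b"
proof -
  obtain i where i: "u i \<noteq> zero" using assms(2) by blast
  have "mul (\<rho> i a) (u i) = mul (\<rho> i b) (u i)"
    using fun_cong[OF assms(1), of i] by (simp add: smult_rho_def)
  then have "\<rho> i a = \<rho> i b" using mul_right_cancel[OF i] by blast
  then show ?thesis using mult_aut_\<rho> by (metis mult_aut_inv_f_f)
qed

lemma smult_scaled_unit_apply:
  "smult a (scaled_unit g j) i = (if i = j then \<rho> j (mul a g) else zero)"
  using scaled_unit_apply[of g j i] by (simp add: smult_rho_def mult_aut_mul[OF mult_aut_\<rho>] mul_zero)

lemma addV_smult_scaled_unit: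
  assumes g: "g \<noteq> zero"
  shows "addV (smult a (scaled_unit g j)) (smult b (scaled_unit g j))
           = smult (add_tau add (\<sigma> j \<circ> \<rho> j \<circ> conj_map mul one g) a b) (scaled_unit g j)"
    (is "?lhs = smult ?c _")
proof
  fix i
  show "?lhs i = smult ?c (scaled_unit g j) i"
  proof (cases "i = j")
    case True
    have p: "mult_aut mul one (\<sigma> j \<circ> \<rho> j)" by (rule mult_aut_comp[OF mult_aut_\<sigma> mult_aut_\<rho>])
    have "?lhs j = add_tau add (\<sigma> j) (\<rho> j (mul a g)) (\<rho> j (mul b g))"
      by (simp add: add_sigma_def smult_scaled_unit_apply)
    also have "\<dots> = \<rho> j (add_tau add (\<sigma> j \<circ> \<rho> j) (mul a g) (mul b g))"
      by (simp add: add_tau_comp mult_aut_bij[OF mult_aut_\<sigma>] mult_aut_bij[OF mult_aut_\<rho>]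
          mult_aut_f_inv_f[OF mult_aut_\<rho>])
    also have "\<dots> = \<rho> j (mul ?c g)" by (simp add: add_tau_mul_right[OF p g])
    finally show ?thesis using True by (simp add: smult_scaled_unit_apply)
  next
    case False
    then show ?thesis
      by (simp add: add_sigma_def smult_scaled_unit_apply
          left_near_field.zero_add[OF coordinate_near_field])
  qed
qed

lemma scaled_unit_in_quasi_kernel: "g \<noteq> zero \<Longrightarrow> scaled_unit g j \<in> quasi_kernel V addV smult"
  unfolding quasi_kernel_def using addV_smult_scaled_unit scaled_unit_in_V by blast

lemma add_u_scaled_unit:
  assumes g: "g \<noteq> zero"
  shows "add_u addV smult (scaled_unit g j) = add_tau add (\<sigma> j \<circ> \<rho> j \<circ> conj_map mul one g)"
proof (intro ext)
  fix a b
  have "scaled_unit g j \<noteq> zeroV"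
    using g by (metis scaled_unit_apply mult_aut_eq_zero_iff[OF mult_aut_\<rho>])
  then show "add_u addV smult (scaled_unit g j) a b
      = add_tau add (\<sigma> j \<circ> \<rho> j \<circ> conj_map mul one g) a b"
    unfolding add_u_def using addV_smult_scaled_unit[OF g] smult_free
    by (intro the_equality) metis+
qed

lemma addV_smult_neg_one: "addV u (smult (neg one) u) = zeroV"
proof
  fix i
  have "\<rho> i (neg one) = nf_neg (add_tau add (\<sigma> i)) zero one"
    by (simp add: mult_aut_neg_one[OF mult_aut_\<rho>] neg_add_tau_one[OF mult_aut_\<sigma>])
  then show "addV u (smult (neg one) u) i = zero"
    by (simp add: add_sigma_def smult_rho_def left_near_field.add_neg_one_mul[OF coordinate_near_field])
qed

lemma scaled_unit_in_add_gen: "scaled_unit g j \<in> add_gen V addV zeroV (quasi_kernel V addV smult)"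
proof (cases "g = zero")
  case True
  then have "scaled_unit g j = zeroV"
    by (auto simp: scaled_unit_apply mult_aut_zero[OF mult_aut_\<rho>])
  then show ?thesis by (simp add: add_gen.gen_zero)
qed (simp add: add_gen.gen_base scaled_unit_in_quasi_kernel)

lemma addV_fun_upd_scaled_unit: "addV (f(j := zero)) (scaled_unit (inv (\<rho> j) (f j)) j) = f"
proof
  fix i
  show "addV (f(j := zero)) (scaled_unit (inv (\<rho> j) (f j)) j) i = f i"
    by (simp add: add_sigma_def scaled_unit_apply mult_aut_f_inv_f[OF mult_aut_\<rho>]
        left_near_field.zero_add[OF coordinate_near_field]
        left_near_field.add_zero[OF coordinate_near_field])
qed

lemma in_add_gen_if_support_subset:
  "finite F \<Longrightarrow> {i. f i \<noteq> zero} \<subseteq> F \<Longrightarrow> f \<in> add_gen V addV zeroV (quasi_kernel V addV smult)"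
proof (induction F arbitrary: f rule: finite_induct)
  case empty
  then have "f = zeroV" by auto
  then show ?case by (simp add: add_gen.gen_zero)
next
  case (insert j F)
  then have "f(j := zero) \<in> add_gen V addV zeroV (quasi_kernel V addV smult)"
    by (intro insert.IH) auto
  then have "addV (f(j := zero)) (scaled_unit (inv (\<rho> j) (f j)) j)
      \<in> add_gen V addV zeroV (quasi_kernel V addV smult)"
    by (rule add_gen.gen_add[OF _ scaled_unit_in_add_gen])
  then show ?case by (simp only: addV_fun_upd_scaled_unit)
qed

lemma V_eq_add_gen: "V = add_gen V addV zeroV (quasi_kernel V addV smult)"
proof
  show "V \<subseteq> add_gen V addV zeroV (quasi_kernel V addV smult)"
    using in_add_gen_if_support_subset unfolding fsupp_fams_def by blast
  show "add_gen V addV zeroV (quasi_kernel V addV smult) \<subseteq> V"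
    by (rule add_gen_subset[OF zeroV_in_V addV_in_V]) (auto simp: quasi_kernel_def)
qed

lemma near_vector_space: "near_vector_space add mul zero one V addV zeroV smult"
  unfolding near_vector_space_def
proof (intro conjI ballI allI impI)
  interpret coord: left_near_field "add_tau add (\<sigma> i)" mul zero one for i
    by (rule coordinate_near_field)
  show "addV (addV u w) x = addV u (addV w x)" for u w x
    by (simp add: add_sigma_def coord.add_assoc)
  show "addV u w = addV w u" for u w
    by (simp add: add_sigma_def coord.add_commute)
  show "addV zeroV u = u" for u
    by (simp add: add_sigma_def coord.zero_add)
  show "smult a (addV u w) = addV (smult a u) (smult a w)" for a u w
    by (simp add: add_sigma_def smult_rho_def coord.distrib_left)
  show "smult (mul a b) u = smult a (smult b u)" for a b u
    by (simp add: smult_rho_def mult_aut_mul[OF mult_aut_\<rho>] mul_assoc)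
  show "smult zero u = zeroV" for u
    by (simp add: smult_rho_def mult_aut_zero[OF mult_aut_\<rho>] zero_mul)
  show "smult one u = u" for u
    by (simp add: smult_rho_def mult_aut_one[OF mult_aut_\<rho>] one_mul)
  show "\<exists>w\<in>V. addV u w = zeroV" if "u \<in> V" for u
    using addV_smult_neg_one smult_in_V[OF that] by blast
  show "u = zeroV \<or> a = b" if "smult a u = smult b u" for a b u
    using smult_free[OF that] by blast
qed (use zeroV_in_V addV_in_V smult_in_V addV_smult_neg_one V_eq_add_gen in auto)

end

theorem mainTheorem6:
  fixes add mul :: "'a \<Rightarrow> 'a \<Rightarrow> 'a" and zero one :: 'a
    and \<sigma> \<rho> :: "'i \<Rightarrow> 'a \<Rightarrow> 'a"
  assumes "near_field add mul zero one"
    and "\<And>i. mult_aut mul one (\<sigma> i)"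
    and "\<And>i. mult_aut mul one (\<rho> i)"
  shows "near_vector_space add mul zero one (fsupp_fams zero)
           (add_sigma add \<sigma>) (\<lambda>i. zero) (smult_rho mul \<rho>)
       \<and> (\<forall>j \<gamma>. \<gamma> \<noteq> zero \<longrightarrow>
            smult_rho mul \<rho> \<gamma> (unit_fam zero one j)
               \<in> quasi_kernel (fsupp_fams zero) (add_sigma add \<sigma>) (smult_rho mul \<rho>)
          \<and> add_u (add_sigma add \<sigma>) (smult_rho mul \<rho>) (smult_rho mul \<rho> \<gamma> (unit_fam zero one j))
              = add_tau add (\<sigma> j \<circ> \<rho> j \<circ> conj_map mul one \<gamma>))"
proof -
  interpret near_field_families add mul zero one \<sigma> \<rho>
    using assms by unfold_locales
  show ?thesis
    using near_vector_space scaled_unit_in_quasi_kernel add_u_scaled_unit by blast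
qed

end
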